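(* Let $H$, $G$ be real Hilbert spaces, $Z$ a nonempty closed convex subset of $H\times G$, $x_0\in H\times G$, $\{\lambda_n\}\subset(0,1]$, $\{H_n\}$ closed convex sets with $Z\subset H_n$, and let $\{x_n\},\{x_{n+1/2}\}$ be generated by $x_{n+1/2}=x_n+\lambda_n(P_{H_n}(x_n)-x_n)$, $x_{n+1}=P_{H(x_0,x_n)\cap C_n}(x_0)$, where each $C_n$ is closed convex with $Z\subset C_n\subset H(x_n,x_{n+1/2})$. Then for every $n\ge1$ and every $\bar x\in H(x_0,x_n)\cap H(x_n,x_{n+1/2})$, $$\|x_{n+1/2}-\bar x\|^2\le\|x_0-\bar x\|^2-\|x_n-x_0\|^2-\|x_{n+1/2}-x_n\|^2.$$
   Context: For $x,y\in H\times G$, $H(x,y):=\{h:\ \langle h-y\mid x-y\rangle\le 0\}$. $P_D$ is the metric projection onto a nonempty closed convex set $D$. *)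

theory Defs
  imports "HOL-Analysis.Analysis"
begin

text \<open>Metric projection onto a set D (well defined and unique when D is nonempty,
closed and convex in a Hilbert space).\<close>
definition metric_proj :: "'a::real_inner set \<Rightarrow> 'a \<Rightarrow> 'a" where
  "metric_proj D x = (SOME p. p \<in> D \<and> (\<forall>y\<in>D. dist x p \<le> dist x y))"

definition halfsp :: "'a::real_inner \<Rightarrow> 'a \<Rightarrow> 'a set" where
  "halfsp x y = {h. inner (h - y) (x - y) \<le> 0}"

end

theory Submission
  imports Defs
begin

text \<open>Membership of the point in H(x_0, x_n) and in H(x_n, x_{n+1/2}) says that the angles
at x_n and at x_{n+1/2} in the respective triangles are obtuse, so each gives a Pythagorean
inequality; chaining the two yields the estimate.\<close>

lemma mem_halfsp_pythagoras:
  fixes x y h :: "'a::real_inner"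
  assumes "h \<in> halfsp x y"
  shows "(norm (y - h))\<^sup>2 + (norm (x - y))\<^sup>2 \<le> (norm (x - h))\<^sup>2"
proof -
  have "x - h = (x - y) + (y - h)" by simp
  then have "(norm (x - h))\<^sup>2 = (norm (x - y))\<^sup>2 + (norm (y - h))\<^sup>2 - 2 * inner (h - y) (x - y)"
    by (simp add: power2_norm_eq_inner inner_diff_left inner_diff_right inner_commute)
  moreover have "inner (h - y) (x - y) \<le> 0"
    using assms by (simp add: halfsp_def)
  ultimately show ?thesis by linarith
qed

theorem corollary13:
  fixes Z :: "('h::{real_inner,complete_space} \<times> 'g::{real_inner,complete_space}) set"
    and x xh :: "nat \<Rightarrow> 'h \<times> 'g"
    and lam :: "nat \<Rightarrow> real"
    and Hs C :: "nat \<Rightarrow> ('h \<times> 'g) set"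
  assumes "Z \<noteq> {}" and "closed Z" and "convex Z"
    and "\<forall>n. 0 < lam n \<and> lam n \<le> 1"
    and "\<forall>n. closed (Hs n) \<and> convex (Hs n) \<and> Z \<subseteq> Hs n"
    and "\<forall>n. xh n = x n + lam n *\<^sub>R (metric_proj (Hs n) (x n) - x n)"
    and "\<forall>n. closed (C n) \<and> convex (C n) \<and> Z \<subseteq> C n \<and> C n \<subseteq> halfsp (x n) (xh n)"
    and "\<forall>n. x (Suc n) = metric_proj (halfsp (x 0) (x n) \<inter> C n) (x 0)"
  shows "\<forall>n\<ge>1. \<forall>xb \<in> halfsp (x 0) (x n) \<inter> halfsp (x n) (xh n).
           (norm (xh n - xb))\<^sup>2 \<le> (norm (x 0 - xb))\<^sup>2 - (norm (x n - x 0))\<^sup>2 - (norm (xh n - x n))\<^sup>2"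
proof (intro allI impI ballI)
  fix n xb
  assume "xb \<in> halfsp (x 0) (x n) \<inter> halfsp (x n) (xh n)"
  then have "(norm (x n - xb))\<^sup>2 + (norm (x 0 - x n))\<^sup>2 \<le> (norm (x 0 - xb))\<^sup>2"
    and "(norm (xh n - xb))\<^sup>2 + (norm (x n - xh n))\<^sup>2 \<le> (norm (x n - xb))\<^sup>2"
    by (auto intro: mem_halfsp_pythagoras)
  then show "(norm (xh n - xb))\<^sup>2 \<le> (norm (x 0 - xb))\<^sup>2 - (norm (x n - x 0))\<^sup>2 - (norm (xh n - x n))\<^sup>2"
    by (simp add: norm_minus_commute)
qed

end
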